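(* Let $N,M\ge 1$ be integers and let $\mathcal H=\mathcal H_+\oplus\mathcal H_-$ with $\mathcal H_+=\mathbb C^N$, $\mathcal H_-=\mathbb C^M$. Let $B$ be a positive semidefinite Hermitian $N\times N$ matrix, $D$ a skew-Hermitian $M\times M$ matrix, and $u$ an $M\times N$ complex matrix that is a partial isometry (i.e. $uu^*u=u$). Let $$\mu=\begin{pmatrix}0 & -Bu^*\\ uB & D\end{pmatrix}.$$ Let $n\ge 1$ and $k$ be integers with $n/2+1<k\le n+1$. Then $$i^{n+1}\big(\mu\, H^{n-1}_{k-1}(\mu)\big)_{--}\,u=0.$$ Consequently, in the system of equations $\frac{\partial}{\partial t^n_k}u=i^{n+1}(\mu H^{n-1}_{k-1}(\mu))_{--}u$, only the times $t^n_k$ with $k\le n/2+1$ give nontrivial evolution.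
   Context: $P_+$ and $P_-$ denote the orthogonal projectors of $\mathcal H$ onto $\mathcal H_+$ and $\mathcal H_-$; for an operator $X$ on $\mathcal H$, $X_{--}$ denotes the block $P_-XP_-$ regarded as an operator on $\mathcal H_-$. For integers $m\ge 0$ and $0\le l\le m+1$ and a matrix $\mu$ on $\mathcal H$, define $$H^m_l(\mu)=\sum_{\substack{i_0,\dots,i_m\in\{0,1\}\\ i_0+\dots+i_m=l}} P_+^{i_0}\mu P_+^{i_1}\mu\cdots\mu P_+^{i_m},$$ with $P_+^0=I$ the identity and $P_+^1=P_+$ (so $H^m_l$ has degree $m$ in $\mu$ and degree $l$ in $P_+$; e.g. $H^0_0=I$, $H^0_1=P_+$). *)

theory Defs
  imports "Jordan_Normal_Form.Schur_Decomposition"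
begin

text \<open>Hilbert space H = C^N (+) C^M, realised as complex (N+M) x (N+M) matrices.\<close>

definition hermitian_mat :: "complex mat \<Rightarrow> bool" where
  "hermitian_mat A \<longleftrightarrow> mat_adjoint A = A"

definition psd_mat :: "nat \<Rightarrow> complex mat \<Rightarrow> bool" where
  "psd_mat n A \<longleftrightarrow> A \<in> carrier_mat n n \<and> hermitian_mat A \<and>
     (\<forall>v \<in> carrier_vec n. \<exists>r::real. r \<ge> 0 \<and> (A *\<^sub>v v) \<bullet>c v = complex_of_real r)"

definition Pplus :: "nat \<Rightarrow> nat \<Rightarrow> complex mat" where
  "Pplus N M = four_block_mat (1\<^sub>m N) (0\<^sub>m N M) (0\<^sub>m M N) (0\<^sub>m M M)"

definition Ppow :: "nat \<Rightarrow> nat \<Rightarrow> bool \<Rightarrow> complex mat" where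
  "Ppow N M b = (if b then Pplus N M else 1\<^sub>m (N + M))"

text \<open>For a word i_0 ... i_m, the product P^{i_0} mu P^{i_1} mu ... mu P^{i_m}.\<close>
fun hprod :: "nat \<Rightarrow> nat \<Rightarrow> complex mat \<Rightarrow> bool list \<Rightarrow> complex mat" where
  "hprod N M mu [] = 1\<^sub>m (N + M)"
| "hprod N M mu [b] = Ppow N M b"
| "hprod N M mu (b # bs) = Ppow N M b * mu * hprod N M mu bs"

definition Hml :: "nat \<Rightarrow> nat \<Rightarrow> nat \<Rightarrow> nat \<Rightarrow> complex mat \<Rightarrow> complex mat" where
  "Hml N M m l mu = foldr (\<lambda>w acc. hprod N M mu w + acc)
      (filter (\<lambda>w. count_list w True = l) (List.n_lists (Suc m) [False, True]))
      (0\<^sub>m (N + M) (N + M))"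

definition minus_block :: "nat \<Rightarrow> nat \<Rightarrow> complex mat \<Rightarrow> complex mat" where
  "minus_block N M X = mat M M (\<lambda>(i, j). X $$ (N + i, N + j))"

definition mu_mat :: "nat \<Rightarrow> nat \<Rightarrow> complex mat \<Rightarrow> complex mat \<Rightarrow> complex mat \<Rightarrow> complex mat" where
  "mu_mat N M B D u = four_block_mat (0\<^sub>m N N) (- (B * mat_adjoint u)) (u * B) D"

end

theory Submission imports Defs begin

text \<open>The upper left block of \<open>\<mu>\<close> vanishes, so \<open>P\<^sub>+ \<mu> P\<^sub>+ = 0\<close>; also \<open>P\<^sub>+ P\<^sub>- = 0\<close>.
  A 0-1 word in which more than half of the letters are 1 has two adjacent ones or ends
  with a one, so for \<open>2l > m + 1\<close> every summand \<open>P^i\<^sub>0 \<mu> \<dots> \<mu> P^i\<^sub>m\<close> of \<open>H\<^sup>m\<^sub>l(\<mu>)\<close> is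
  annihilated by \<open>P\<^sub>-\<close> on the right; hence the \<open>--\<close> block of \<open>\<mu> H\<^sup>m\<^sub>l(\<mu>)\<close> vanishes.\<close>

lemma adjacent_or_last_True_if_majority_True:
  assumes "length w < 2 * count_list w True"
  shows "(\<exists>xs ys. w = xs @ True # True # ys) \<or> (\<exists>xs. w = xs @ [True])"
  using assms
proof (induction w rule: induct_list012)
  case (2 x)
  then have "[x] = [] @ [True]" by (cases x) auto
  then show ?case by blast
next
  case (3 x y zs)
  have Cons: "(\<exists>xs ys. a # v = xs @ True # True # ys) \<or> (\<exists>xs. a # v = xs @ [True])"
    if "(\<exists>xs ys. v = xs @ True # True # ys) \<or> (\<exists>xs. v = xs @ [True])" for a v
    using that by (metis append_Cons)
  consider "x \<and> y" | "\<not> x" | "x \<and> \<not> y" by blast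
  then show ?case
  proof cases
    case 1
    then have "x # y # zs = [] @ True # True # zs" by simp
    then show ?thesis by blast
  next
    case 2
    with "3.prems" have "length (y # zs) < 2 * count_list (y # zs) True" by simp
    then show ?thesis using "3.IH"(2) Cons by blast
  next
    case 3
    with "3.prems" have "length zs < 2 * count_list zs True" by simp
    then show ?thesis using "3.IH"(1) Cons by blast
  qed
qed simp

lemma assoc_mult_mat_dims:
  "dim_col A = dim_row B \<Longrightarrow> dim_col B = dim_row C \<Longrightarrow> A * B * C = A * (B * C)"
  by (rule assoc_mult_mat[of A "dim_row A" "dim_col A" B "dim_col B" C "dim_col C"]) auto

definition Pminus :: "nat \<Rightarrow> nat \<Rightarrow> complex mat" where
  "Pminus N M = four_block_mat (0\<^sub>m N N) (0\<^sub>m N M) (0\<^sub>m M N) (1\<^sub>m M)"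

lemma Pplus_carrier_mat [simp]: "Pplus N M \<in> carrier_mat (N + M) (N + M)"
  by (simp add: Pplus_def)

lemma Pminus_carrier_mat [simp]: "Pminus N M \<in> carrier_mat (N + M) (N + M)"
  by (simp add: Pminus_def)

lemma Ppow_carrier_mat [simp]: "Ppow N M b \<in> carrier_mat (N + M) (N + M)"
  by (simp add: Ppow_def)

lemma projector_dims [simp]:
  "dim_row (Pplus N M) = N + M" "dim_col (Pplus N M) = N + M"
  "dim_row (Pminus N M) = N + M" "dim_col (Pminus N M) = N + M"
  "dim_row (Ppow N M b) = N + M" "dim_col (Ppow N M b) = N + M"
  using Pplus_carrier_mat Pminus_carrier_mat Ppow_carrier_mat by blast+

lemma Pplus_mult_Pminus: "Pplus N M * Pminus N M = 0\<^sub>m (N + M) (N + M)"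
  unfolding Pplus_def Pminus_def
  by (subst mult_four_block_mat[of _ N N _ M _ M]) auto

lemma Pplus_mult_block_mult_Pplus:
  assumes "B \<in> carrier_mat N M" "C \<in> carrier_mat M N" "D \<in> carrier_mat M M"
  shows "Pplus N M * four_block_mat (0\<^sub>m N N) B C D * Pplus N M = 0\<^sub>m (N + M) (N + M)"
  unfolding Pplus_def using assms
  by (subst mult_four_block_mat[of _ N N _ M _ M], auto,
      subst mult_four_block_mat[of _ N N _ M _ M], auto)

lemma mat_adjoint_carrier_mat: "A \<in> carrier_mat m n \<Longrightarrow> mat_adjoint A \<in> carrier_mat n m"
  unfolding mat_adjoint_def by auto

lemma mu_mat_carrier_mat:
  assumes "B \<in> carrier_mat N N" "D \<in> carrier_mat M M" "u \<in> carrier_mat M N"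
  shows "mu_mat N M B D u \<in> carrier_mat (N + M) (N + M)"
  using assms mat_adjoint_carrier_mat[OF assms(3)]
  unfolding mu_mat_def by (intro four_block_carrier_mat) auto

lemma Pplus_mult_mu_mat_mult_Pplus:
  assumes "B \<in> carrier_mat N N" "D \<in> carrier_mat M M" "u \<in> carrier_mat M N"
  shows "Pplus N M * mu_mat N M B D u * Pplus N M = 0\<^sub>m (N + M) (N + M)"
  using assms mult_carrier_mat[OF assms(1) mat_adjoint_carrier_mat[OF assms(3)]]
  unfolding mu_mat_def by (intro Pplus_mult_block_mult_Pplus) auto

lemma minus_block_eq_zero:
  assumes "X \<in> carrier_mat (N + M) (N + M)" and "X * Pminus N M = 0\<^sub>m (N + M) (N + M)"
  shows "minus_block N M X = 0\<^sub>m M M"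
proof (rule eq_matI)
  fix i j assume "i < dim_row (0\<^sub>m M M :: complex mat)" "j < dim_col (0\<^sub>m M M :: complex mat)"
  then have ij: "i < M" "j < M" by auto
  have "col (Pminus N M) (N + j) = unit_vec (N + M) (N + j)"
    using ij by (intro eq_vecI) (auto simp: Pminus_def index_mat_four_block)
  then have "(X * Pminus N M) $$ (N + i, N + j) = X $$ (N + i, N + j)"
    using assms(1) ij by simp
  with assms(2) ij show "minus_block N M X $$ (i, j) = 0\<^sub>m M M $$ (i, j)"
    by (simp add: minus_block_def)
qed (auto simp: minus_block_def)

context
  fixes N M :: nat and mu :: "complex mat"
  assumes mu_carrier: "mu \<in> carrier_mat (N + M) (N + M)"
begin

lemma mu_dims [simp]: "dim_row mu = N + M" "dim_col mu = N + M"
  using mu_carrier by auto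

lemma hprod_carrier_mat [simp]: "hprod N M mu w \<in> carrier_mat (N + M) (N + M)"
  using mu_carrier by (induction N M mu w rule: hprod.induct) auto

lemma hprod_dims [simp]: "dim_row (hprod N M mu w) = N + M" "dim_col (hprod N M mu w) = N + M"
  using hprod_carrier_mat by blast+

lemma hprod_Cons: "w \<noteq> [] \<Longrightarrow> hprod N M mu (b # w) = Ppow N M b * mu * hprod N M mu w"
  by (cases w) auto

lemma hprod_adjacent_True_eq_zero:
  assumes PmuP: "Pplus N M * mu * Pplus N M = 0\<^sub>m (N + M) (N + M)"
  shows "hprod N M mu (xs @ True # True # ys) = 0\<^sub>m (N + M) (N + M)"
proof (induction xs)
  case Nil
  show ?case
  proof (cases "ys = []")
    case False
    have "hprod N M mu (True # True # ys)
        = (Pplus N M * mu * Pplus N M) * mu * hprod N M mu ys"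
      using False mu_carrier by (simp add: hprod_Cons Ppow_def assoc_mult_mat_dims)
    with PmuP mu_carrier show ?thesis by simp
  qed (use PmuP in \<open>simp add: Ppow_def\<close>)
next
  case (Cons x xs)
  then show ?case by (simp add: hprod_Cons)
qed

lemma hprod_last_True_mult_Pminus:
  "hprod N M mu (xs @ [True]) * Pminus N M = 0\<^sub>m (N + M) (N + M)"
proof (induction xs)
  case Nil
  then show ?case by (simp add: Ppow_def Pplus_mult_Pminus)
next
  case (Cons x xs)
  have "hprod N M mu ((x # xs) @ [True]) * Pminus N M
      = Ppow N M x * mu * (hprod N M mu (xs @ [True]) * Pminus N M)"
    using mu_carrier by (simp add: hprod_Cons assoc_mult_mat_dims)
  with Cons mu_carrier show ?case by simp
qed

lemma hprod_majority_True_mult_Pminus: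
  assumes PmuP: "Pplus N M * mu * Pplus N M = 0\<^sub>m (N + M) (N + M)"
    and "length w < 2 * count_list w True"
  shows "hprod N M mu w * Pminus N M = 0\<^sub>m (N + M) (N + M)"
  using adjacent_or_last_True_if_majority_True[OF assms(2)]
    hprod_adjacent_True_eq_zero[OF PmuP] hprod_last_True_mult_Pminus
  by auto

lemma foldr_hprod_carrier_mat:
  "foldr (\<lambda>w acc. hprod N M mu w + acc) ws (0\<^sub>m (N + M) (N + M)) \<in> carrier_mat (N + M) (N + M)"
  by (induction ws) auto

lemma foldr_hprod_mult_eq_zero:
  assumes "X \<in> carrier_mat (N + M) (N + M)"
    and "\<And>w. w \<in> set ws \<Longrightarrow> hprod N M mu w * X = 0\<^sub>m (N + M) (N + M)"
  shows "foldr (\<lambda>w acc. hprod N M mu w + acc) ws (0\<^sub>m (N + M) (N + M)) * X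
       = 0\<^sub>m (N + M) (N + M)"
  using assms(2)
proof (induction ws)
  case Nil
  then show ?case using assms(1) by simp
next
  case (Cons w ws)
  let ?S = "foldr (\<lambda>w acc. hprod N M mu w + acc) ws (0\<^sub>m (N + M) (N + M))"
  have "(hprod N M mu w + ?S) * X = hprod N M mu w * X + ?S * X"
    using assms(1) foldr_hprod_carrier_mat by (intro add_mult_distrib_mat) auto
  with Cons show ?case by simp
qed

lemma Hml_carrier_mat: "Hml N M m l mu \<in> carrier_mat (N + M) (N + M)"
  unfolding Hml_def by (rule foldr_hprod_carrier_mat)

lemma Hml_mult_Pminus:
  assumes PmuP: "Pplus N M * mu * Pplus N M = 0\<^sub>m (N + M) (N + M)"
    and "Suc m < 2 * l"
  shows "Hml N M m l mu * Pminus N M = 0\<^sub>m (N + M) (N + M)"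
  unfolding Hml_def
proof (rule foldr_hprod_mult_eq_zero)
  fix w assume "w \<in> set (filter (\<lambda>w. count_list w True = l) (List.n_lists (Suc m) [False, True]))"
  then have "length w = Suc m" "count_list w True = l"
    by (auto dest: length_n_lists_elem)
  with assms show "hprod N M mu w * Pminus N M = 0\<^sub>m (N + M) (N + M)"
    by (intro hprod_majority_True_mult_Pminus) auto
qed simp

lemma minus_block_mult_Hml_eq_zero:
  assumes "Pplus N M * mu * Pplus N M = 0\<^sub>m (N + M) (N + M)"
    and "Suc m < 2 * l"
  shows "minus_block N M (mu * Hml N M m l mu) = 0\<^sub>m M M"
proof (rule minus_block_eq_zero)
  have "mu * Hml N M m l mu * Pminus N M = mu * (Hml N M m l mu * Pminus N M)"
    using mu_carrier Hml_carrier_mat by (intro assoc_mult_mat) auto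
  with Hml_mult_Pminus[OF assms] mu_carrier
  show "mu * Hml N M m l mu * Pminus N M = 0\<^sub>m (N + M) (N + M)" by simp
qed (use mu_carrier Hml_carrier_mat in auto)

end

theorem proposition2p2:
  fixes N M n k :: nat and B D u :: "complex mat"
  assumes "N \<ge> 1" and "M \<ge> 1"
    and "B \<in> carrier_mat N N" and "psd_mat N B"
    and "D \<in> carrier_mat M M" and "mat_adjoint D = - D"
    and "u \<in> carrier_mat M N" and "u * mat_adjoint u * u = u"
    and "n \<ge> 1"
    and "real n / 2 + 1 < real k" and "k \<le> n + 1"
  shows "(\<i> ^ (n + 1)) \<cdot>\<^sub>m
           minus_block N M (mu_mat N M B D u * Hml N M (n - 1) (k - 1) (mu_mat N M B D u)) * u
         = 0\<^sub>m M N"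
proof -
  have "Suc (n - 1) < 2 * (k - 1)" using assms(9,10) by linarith
  with minus_block_mult_Hml_eq_zero[OF mu_mat_carrier_mat Pplus_mult_mu_mat_mult_Pplus]
  have "minus_block N M (mu_mat N M B D u * Hml N M (n - 1) (k - 1) (mu_mat N M B D u)) = 0\<^sub>m M M"
    using assms(3,5,7) by blast
  then show ?thesis using assms(7) by simp
qed

end
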